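(* Let $E\in\mathbb N$ and let $0<\eta<\frac{2}{E}$. Let $A=\sum_{k,l=0}^{+\infty}A_{kl}\ket{k}\!\bra{l}$ be an operator on the single-mode Hilbert space $\mathcal H$, and let $\rho=\sum_{k,l=0}^{E}\rho_{kl}\ket{k}\!\bra{l}$ be a density operator with support bounded by $E$ in the Fock basis. Then $$\left|\mathrm{Tr}(A\rho)-\mathbb E_{\alpha\leftarrow Q_\rho}\big[f_A(\alpha,\eta)\big]\right|\le \eta K_A .$$
   Context: $\mathcal H$ is the single-mode (infinite-dimensional, separable) Hilbert space with Fock basis $\{\ket n\}_{n\in\mathbb N}$. For $\alpha\in\mathbb C$, $\ket\alpha$ denotes the coherent state. The Husimi function of a state $\rho$ is $Q_\rho(\alpha)=\frac{1}{\pi}\bra\alpha\rho\ket\alpha$, a probability density on $\mathbb C$; heterodyne detection of $\rho$ yields a sample $\alpha\in\mathbb C$ distributed according to $Q_\rho$, and $\mathbb E_{\alpha\leftarrow Q_\rho}[g(\alpha)]=\int_{\mathbb C} Q_\rho(\alpha)g(\alpha)\,d^2\alpha$. For $k,l\ge 0$ and $z\in\mathbb C$ define the polynomials $$\mathcal L_{k,l}(z)=e^{zz^*}\frac{(-1)^{k+l}}{\sqrt{k!}\sqrt{l!}}\frac{\partial^{k+l}}{\partial z^k\partial z^{*l}}e^{-zz^*}=\sum_{p=0}^{\min(k,l)}\frac{\sqrt{k!}\sqrt{l!}(-1)^p}{p!(k-p)!(l-p)!}z^{l-p}z^{*(k-p)}.$$ For an operator $A=\sum_{k,l}A_{kl}\ket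 k\!\bra l$, the fixed cutoff $E\in\mathbb N$, $z\in\mathbb C$ and $0<\eta<1$, define $$f_A(z,\eta)=\frac{1}{\eta}e^{(1-\frac1\eta)zz^*}\sum_{k,l=0}^{E}\frac{A_{kl}}{\sqrt{\eta^{k+l}}}\,\mathcal L_{k,l}\!\left(\frac{z}{\sqrt\eta}\right),\qquad K_A=\sum_{k,l=0}^{E}|A_{kl}|\sqrt{(k+1)(l+1)}.$$ *)

theory Defs
  imports "HOL-Analysis.Analysis"
begin

text \<open>Operators on the single-mode Hilbert space are represented by their
  matrices in the Fock basis: A k l = <k|A|l>.\<close>

definition coh :: "complex \<Rightarrow> nat \<Rightarrow> complex" where
  "coh \<alpha> n = complex_of_real (exp (- (cmod \<alpha>)\<^sup>2 / 2) / sqrt (fact n)) * \<alpha> ^ n"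

definition density_bounded :: "nat \<Rightarrow> (nat \<Rightarrow> nat \<Rightarrow> complex) \<Rightarrow> bool" where
  "density_bounded E \<rho> \<longleftrightarrow>
     (\<forall>k l. (E < k \<or> E < l) \<longrightarrow> \<rho> k l = 0) \<and>
     (\<forall>k l. \<rho> l k = cnj (\<rho> k l)) \<and>
     (\<forall>x :: nat \<Rightarrow> complex. Re (\<Sum>k\<le>E. \<Sum>l\<le>E. cnj (x k) * \<rho> k l * x l) \<ge> 0) \<and>
     (\<Sum>k\<le>E. \<rho> k k) = 1"

text \<open>Husimi function Q_rho(alpha) = (1/pi) <alpha|rho|alpha>, for rho supported in {0..E}
  (so the Fock expansion reduces to the finite sum over k,l \<le> E).\<close>
definition husimi :: "nat \<Rightarrow> (nat \<Rightarrow> nat \<Rightarrow> complex) \<Rightarrow> complex \<Rightarrow> complex" where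
  "husimi E \<rho> \<alpha> = (1 / complex_of_real pi) *
     (\<Sum>k\<le>E. \<Sum>l\<le>E. cnj (coh \<alpha> k) * \<rho> k l * coh \<alpha> l)"

definition tr_prod :: "nat \<Rightarrow> (nat \<Rightarrow> nat \<Rightarrow> complex) \<Rightarrow> (nat \<Rightarrow> nat \<Rightarrow> complex) \<Rightarrow> complex" where
  "tr_prod E A \<rho> = (\<Sum>k\<le>E. \<Sum>l\<le>E. A k l * \<rho> l k)"

definition LL :: "nat \<Rightarrow> nat \<Rightarrow> complex \<Rightarrow> complex" where
  "LL k l z = (\<Sum>p\<le>min k l.
     complex_of_real (sqrt (fact k) * sqrt (fact l) * (-1) ^ p / (fact p * fact (k - p) * fact (l - p)))
       * z ^ (l - p) * cnj z ^ (k - p))"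

definition fA :: "nat \<Rightarrow> (nat \<Rightarrow> nat \<Rightarrow> complex) \<Rightarrow> complex \<Rightarrow> real \<Rightarrow> complex" where
  "fA E A z \<eta> = complex_of_real (1 / \<eta> * exp ((1 - 1 / \<eta>) * (cmod z)\<^sup>2)) *
     (\<Sum>k\<le>E. \<Sum>l\<le>E. A k l / complex_of_real (sqrt (\<eta> ^ (k + l)))
        * LL k l (z / complex_of_real (sqrt \<eta>)))"

definition KA :: "nat \<Rightarrow> (nat \<Rightarrow> nat \<Rightarrow> complex) \<Rightarrow> real" where
  "KA E A = (\<Sum>k\<le>E. \<Sum>l\<le>E. cmod (A k l) * sqrt (real ((k + 1) * (l + 1))))"

end

(* Expanding the Husimi function and the Laguerre polynomials, Q_rho(alpha) f_A(alpha, eta)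
   is a finite combination of Gaussian monomials exp(-|alpha|^2/eta) alpha^a conj(alpha)^b. Their
   integrals over the plane vanish for a <> b and equal pi a! eta^(a+1) for a = b (integration by parts
   along horizontal and vertical lines). Summing the Laguerre coefficients with an alternating
   Vandermonde-type identity gives the exact formula
     E[f_A] = sum_{k,l} A_kl sum_{j>=0} eta^j sqrt(C(k+j,j) C(l+j,j)) rho_(l+j)(k+j),
   whose j = 0 part is Tr(A rho). For the rest, positivity of rho gives
   |rho_ab|^2 <= rho_aa rho_bb, and Cauchy-Schwarz reduces it to sums
   sum_(j>=1) eta^j C(m+j,j) rho_(m+j)(m+j). Since eta E < 2, eta^j C(m+j,j) <= eta (m+1) whenever
   m + j <= E, so each such sum is at most eta (m+1) and the (k,l) remainder is at most
   eta sqrt((k+1)(l+1)). *)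

theory Submission
  imports Defs "HOL-Probability.Distributions" "HOL-Real_Asymp.Real_Asymp"
begin

section \<open>Gaussian moments on the complex plane\<close>

lemma measurable_Complex_pair [measurable]:
  "(\<lambda>(x, y). Complex x y) \<in> borel_measurable (lborel \<Otimes>\<^sub>M lborel)"
proof -
  have "(\<lambda>(x, y). Complex x y) = (\<lambda>p. complex_of_real (fst p) + \<i> * complex_of_real (snd p))"
    by (auto simp: fun_eq_iff complex_eq_iff)
  then show ?thesis by simp
qed

lemma distr_Complex_lborel:
  "distr (lborel \<Otimes>\<^sub>M lborel) borel (\<lambda>(x, y). Complex x y) = (lborel :: complex measure)"
proof (rule lborel_eqI[symmetric])
  fix l u :: complex assume le: "\<And>b. b \<in> Basis \<Longrightarrow> l \<bullet> b \<le> u \<bullet> b"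
  have "Re l \<le> Re u" "Im l \<le> Im u"
    using le[of 1] le[of \<i>] by (auto simp: Basis_complex_def)
  moreover have "(\<lambda>(x, y). Complex x y) -` box l u \<inter> space (lborel \<Otimes>\<^sub>M lborel)
      = box (Re l) (Re u) \<times> box (Im l) (Im u)"
    by (auto simp: box_def Basis_complex_def space_pair_measure)
  ultimately show "emeasure (distr (lborel \<Otimes>\<^sub>M lborel) borel (\<lambda>(x, y). Complex x y)) (box l u)
      = (\<Prod>b\<in>Basis. (u - l) \<bullet> b)"
    by (simp add: emeasure_distr lborel.emeasure_pair_measure_Times ennreal_mult Basis_complex_def)
qed simp

lemma integral_complex_eq_zero_by_lines:
  fixes D :: "complex \<Rightarrow> complex"
  assumes [measurable]: "D \<in> borel_measurable borel" and "integrable lborel D"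
    and w: "w \<in> {1, \<i>}"
    and lines: "\<And>z. integrable lborel (\<lambda>t. D (z + of_real t * w))
                 \<Longrightarrow> (\<integral>t. D (z + of_real t * w) \<partial>lborel) = 0"
  shows "integral\<^sup>L lborel D = 0"
proof -
  define D2 where "D2 = (\<lambda>x y. D (Complex x y))"
  have "integrable (distr (lborel \<Otimes>\<^sub>M lborel) borel (\<lambda>(x, y). Complex x y)) D"
    using assms(2) by (simp add: distr_Complex_lborel)
  then have int2: "integrable (lborel \<Otimes>\<^sub>M lborel) (case_prod D2)"
    by (subst (asm) integrable_distr_eq) (auto simp: D2_def case_prod_beta')
  have "integral\<^sup>L lborel D = integral\<^sup>L (distr (lborel \<Otimes>\<^sub>M lborel) borel (\<lambda>(x, y). Complex x y)) D"
    by (simp add: distr_Complex_lborel)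
  also have "\<dots> = integral\<^sup>L (lborel \<Otimes>\<^sub>M lborel) (case_prod D2)"
    by (subst integral_distr) (auto simp: D2_def case_prod_beta')
  finally have eq: "integral\<^sup>L lborel D = integral\<^sup>L (lborel \<Otimes>\<^sub>M lborel) (case_prod D2)" .
  show ?thesis
  proof (cases "w = 1")
    case True
    have "Complex x y = \<i> * of_real y + of_real x * w" for x y
      using True by (simp add: complex_eq_iff)
    then have line: "D2 x y = D (\<i> * of_real y + of_real x * w)" for x y
      by (simp add: D2_def)
    have "AE y in lborel. (\<integral>x. D2 x y \<partial>lborel) = 0"
      using lborel_pair.AE_integrable_snd[OF int2] by eventually_elim (simp add: line lines)
    then show ?thesis
      unfolding eq lborel_pair.integral_snd[OF int2, symmetric] by (simp add: integral_eq_zero_AE)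
  next
    case False
    with w have "w = \<i>" by simp
    then have "Complex x y = of_real x + of_real y * w" for x y
      by (simp add: complex_eq_iff)
    then have line: "D2 x y = D (of_real x + of_real y * w)" for x y
      by (simp add: D2_def)
    have "AE x in lborel. (\<integral>y. D2 x y \<partial>lborel) = 0"
      using lborel_pair.AE_integrable_fst[OF int2] by eventually_elim (simp add: line lines)
    then show ?thesis
      unfolding eq lborel_pair.integral_fst[OF int2, symmetric] by (simp add: integral_eq_zero_AE)
  qed
qed

lemma has_bochner_integral_gaussian:
  assumes "0 < c"
  shows "has_bochner_integral lborel (\<lambda>t::real. exp (- c * t\<^sup>2)) (sqrt (pi / c))"
proof -
  define \<sigma> where "\<sigma> = 1 / sqrt (2 * c)"
  have \<sigma>: "0 < \<sigma>" "\<sigma>\<^sup>2 = 1 / (2 * c)"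
    using assms by (simp_all add: \<sigma>_def power_divide)
  have density: "exp (- c * t\<^sup>2) = sqrt (pi / c) * normal_density 0 \<sigma> t" for t
    using assms by (simp add: normal_density_def \<sigma>)
  have "has_bochner_integral lborel (normal_density 0 \<sigma>) 1"
    using \<sigma> by (simp add: has_bochner_integral_iff)
  from has_bochner_integral_mult_right[OF this, of "sqrt (pi / c)"] show ?thesis
    unfolding density by simp
qed

lemma has_bochner_integral_gaussian_complex:
  assumes "0 < c"
  shows "has_bochner_integral lborel (\<lambda>z::complex. exp (- c * (cmod z)\<^sup>2)) (pi / c)"
proof (rule has_bochner_integral_nn_integral)
  have real_line: "(\<integral>\<^sup>+t. ennreal (exp (- c * t\<^sup>2)) \<partial>lborel) = ennreal (sqrt (pi / c))"
    using has_bochner_integral_gaussian[OF assms]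
    by (simp add: has_bochner_integral_iff nn_integral_eq_integral)
  have product: "(\<lambda>z. ennreal (exp (- c * (cmod z)\<^sup>2)))
      = (\<lambda>z::complex. \<Prod>b\<in>Basis. ennreal (exp (- c * (z \<bullet> b)\<^sup>2)))"
  proof
    fix z :: complex
    have "exp (- c * (cmod z)\<^sup>2) = exp (- c * (Re z)\<^sup>2) * exp (- c * (Im z)\<^sup>2)"
      by (simp add: cmod_power2 ring_distribs flip: exp_add)
    then show "ennreal (exp (- c * (cmod z)\<^sup>2)) = (\<Prod>b\<in>Basis. ennreal (exp (- c * (z \<bullet> b)\<^sup>2)))"
      by (simp add: Basis_complex_def ennreal_mult)
  qed
  have "(\<integral>\<^sup>+z. ennreal (exp (- c * (cmod z)\<^sup>2)) \<partial>(lborel::complex measure))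
      = (\<Prod>b\<in>(Basis::complex set). \<integral>\<^sup>+t. ennreal (exp (- c * t\<^sup>2)) \<partial>lborel)"
    unfolding product by (rule nn_integral_lborel_prod) auto
  also have "\<dots> = ennreal (sqrt (pi / c)) * ennreal (sqrt (pi / c))"
    unfolding real_line by (simp add: Basis_complex_def)
  also have "\<dots> = ennreal (pi / c)"
    using assms by (simp flip: ennreal_mult)
  finally show "(\<integral>\<^sup>+z. ennreal (exp (- c * (cmod z)\<^sup>2)) \<partial>(lborel::complex measure)) = ennreal (pi / c)" .
qed (use assms in auto)

lemma integral_deriv_vanishing_at_infinity:
  fixes F f :: "real \<Rightarrow> 'a::euclidean_space"
  assumes "\<And>x. (F has_vector_derivative f x) (at x)" and "\<And>x. isCont f x"
    and "integrable lborel f"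
    and "(F \<longlongrightarrow> 0) at_top" and "(F \<longlongrightarrow> 0) at_bot"
  shows "integral\<^sup>L lborel f = 0"
proof -
  have "(LBINT x=-\<infinity>..\<infinity>. f x) = 0 - 0"
    by (rule interval_integral_FTC_integrable)
       (use assms in \<open>auto simp: set_integrable_def ereal_tendsto_simps\<close>)
  then show ?thesis
    by (simp add: interval_lebesgue_integral_def set_lebesgue_integral_def)
qed

definition gaussian_monomial :: "real \<Rightarrow> nat \<Rightarrow> nat \<Rightarrow> complex \<Rightarrow> complex" where
  "gaussian_monomial c a b z = of_real (exp (- c * (cmod z)\<^sup>2)) * z ^ a * cnj z ^ b"

lemma measurable_cnj [measurable]: "cnj \<in> borel_measurable borel"
  by (intro borel_measurable_continuous_onI continuous_intros)

lemma measurable_gaussian_monomial [measurable]: "gaussian_monomial c a b \<in> borel_measurable borel"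
  unfolding gaussian_monomial_def by measurable

lemma gaussian_monomial_mult:
  "gaussian_monomial c a b z * gaussian_monomial d m n z = gaussian_monomial (c + d) (a + m) (b + n) z"
proof -
  have "exp (- c * (cmod z)\<^sup>2) * exp (- d * (cmod z)\<^sup>2) = exp (- (c + d) * (cmod z)\<^sup>2)"
    by (simp add: ring_distribs flip: exp_add)
  then show ?thesis
    by (simp add: gaussian_monomial_def power_add mult_ac flip: of_real_mult)
qed

lemma power_le_exp_mult:
  assumes "0 \<le> s"
  shows "s ^ n \<le> real n ^ n * exp s"
proof (cases "n = 0")
  case False
  have "s / n \<le> exp (s / n)"
    using exp_ge_add_one_self[of "s / n"] by linarith
  then have "(s / n) ^ n \<le> exp (s / n) ^ n"
    using assms by (intro power_mono) auto
  also have "\<dots> = exp s"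
    using False by (simp flip: exp_of_nat_mult)
  finally show ?thesis
    using False by (simp add: field_simps)
qed (use assms in simp)

lemma power_mult_gaussian_le:
  assumes "0 < c" and "0 \<le> t"
  shows "t ^ n * exp (- c * t\<^sup>2) \<le> (1 + (2 / c) ^ n * real n ^ n) * exp (- (c / 2) * t\<^sup>2)"
proof -
  have "t ^ n \<le> 1 + (t\<^sup>2) ^ n"
  proof (cases "t \<le> 1")
    case True
    then show ?thesis
      using \<open>0 \<le> t\<close> power_le_one[of t n] by (simp add: add_increasing2)
  next
    case False
    then have "t ^ n \<le> t ^ (2 * n)"
      by (intro power_increasing) auto
    then show ?thesis
      by (simp add: power_mult)
  qed
  also have "(t\<^sup>2) ^ n = (2 / c) ^ n * ((c / 2) * t\<^sup>2) ^ n"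
    using assms by (simp flip: power_mult_distrib)
  also have "\<dots> \<le> (2 / c) ^ n * (real n ^ n * exp ((c / 2) * t\<^sup>2))"
    using assms by (intro mult_left_mono power_le_exp_mult) auto
  also have "1 + \<dots> \<le> (1 + (2 / c) ^ n * real n ^ n) * exp ((c / 2) * t\<^sup>2)"
    using assms by (simp add: algebra_simps)
  finally have "t ^ n * exp (- c * t\<^sup>2)
      \<le> (1 + (2 / c) ^ n * real n ^ n) * exp ((c / 2) * t\<^sup>2) * exp (- c * t\<^sup>2)"
    by (intro mult_right_mono) auto
  also have "\<dots> = (1 + (2 / c) ^ n * real n ^ n) * exp (- (c / 2) * t\<^sup>2)"
    by (simp add: algebra_simps flip: exp_add)
  finally show ?thesis .
qed

lemma gaussian_monomial_bound:
  assumes "0 < c"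
  obtains K where "\<And>z. norm (gaussian_monomial c a b z) \<le> K * exp (- (c / 2) * (cmod z)\<^sup>2)"
proof
  fix z
  have "norm (gaussian_monomial c a b z) = cmod z ^ (a + b) * exp (- c * (cmod z)\<^sup>2)"
    by (simp add: gaussian_monomial_def norm_mult norm_power power_add)
  also have "\<dots> \<le> (1 + (2 / c) ^ (a + b) * real (a + b) ^ (a + b)) * exp (- (c / 2) * (cmod z)\<^sup>2)"
    using assms by (rule power_mult_gaussian_le) simp
  finally show "norm (gaussian_monomial c a b z)
      \<le> (1 + (2 / c) ^ (a + b) * real (a + b) ^ (a + b)) * exp (- (c / 2) * (cmod z)\<^sup>2)" .
qed

lemma integrable_gaussian_monomial:
  assumes "0 < c"
  shows "integrable lborel (gaussian_monomial c a b)"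
proof -
  obtain K where K: "\<And>z. norm (gaussian_monomial c a b z) \<le> K * exp (- (c / 2) * (cmod z)\<^sup>2)"
    using gaussian_monomial_bound[OF assms, where a = a and b = b] by blast
  have "integrable lborel (\<lambda>z::complex. K * exp (- (c / 2) * (cmod z)\<^sup>2))"
    using has_bochner_integral_gaussian_complex[of "c / 2"] assms
    by (simp add: has_bochner_integral_iff)
  then show ?thesis
  proof (rule Bochner_Integration.integrable_bound)
    show "AE z in lborel. norm (gaussian_monomial c a b z) \<le> norm (K * exp (- (c / 2) * (cmod z)\<^sup>2))"
    proof (rule AE_I2)
      fix z
      have "K * exp (- (c / 2) * (cmod z)\<^sup>2) \<le> norm (K * exp (- (c / 2) * (cmod z)\<^sup>2))"
        by simp
      then show "norm (gaussian_monomial c a b z) \<le> norm (K * exp (- (c / 2) * (cmod z)\<^sup>2))"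
        using K[of z] by linarith
    qed
  qed simp
qed

lemma tendsto_gaussian_monomial_at_infinity:
  assumes "0 < c"
  shows "(gaussian_monomial c a b \<longlongrightarrow> 0) at_infinity"
proof -
  obtain K where K: "\<And>z. norm (gaussian_monomial c a b z) \<le> K * exp (- (c / 2) * (cmod z)\<^sup>2)"
    using gaussian_monomial_bound[OF assms, where a = a and b = b] by blast
  then have "\<forall>\<^sub>F z in at_infinity. norm (gaussian_monomial c a b z) \<le> K * exp (- (c / 2) * (cmod z)\<^sup>2)"
    by (simp add: always_eventually)
  moreover have "((\<lambda>t. exp (- (c / 2) * t\<^sup>2)) \<longlongrightarrow> 0) at_top"
    using assms by real_asymp
  then have "((\<lambda>t. K * exp (- (c / 2) * t\<^sup>2)) \<longlongrightarrow> 0) at_top"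
    by (rule tendsto_mult_right_zero)
  then have "((\<lambda>z. K * exp (- (c / 2) * (cmod z)\<^sup>2)) \<longlongrightarrow> 0) at_infinity"
    using filterlim_norm_at_top by (rule filterlim_compose)
  ultimately show ?thesis
    by (rule Lim_null_comparison)
qed

definition gaussian_monomial_deriv :: "real \<Rightarrow> nat \<Rightarrow> nat \<Rightarrow> complex \<Rightarrow> complex \<Rightarrow> complex" where
  "gaussian_monomial_deriv c a b w z =
     w * (of_nat a * gaussian_monomial c (a - 1) b z - of_real c * gaussian_monomial c a (b + 1) z)
     + cnj w * (of_nat b * gaussian_monomial c a (b - 1) z - of_real c * gaussian_monomial c (a + 1) b z)"

lemma gaussian_monomial_eq:
  "gaussian_monomial c a b z = exp (- of_real c * (z * cnj z)) * z ^ a * cnj z ^ b"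
  unfolding gaussian_monomial_def complex_norm_square[symmetric] by (simp flip: exp_of_real)

lemma has_vector_derivative_gaussian_monomial_line:
  "((\<lambda>t. gaussian_monomial c a b (z + of_real t * w)) has_vector_derivative
      gaussian_monomial_deriv c a b w (z + of_real t * w)) (at t)"
proof -
  define g where "g s = exp (- of_real c * ((z + s * w) * (cnj z + s * cnj w)))
    * (z + s * w) ^ a * (cnj z + s * cnj w) ^ b" for s
  have "gaussian_monomial c a b (z + of_real s * w) = g (of_real s)" for s
    by (simp add: gaussian_monomial_eq g_def)
  moreover have "(g has_field_derivative gaussian_monomial_deriv c a b w (z + of_real t * w)) (at (of_real t))"
    unfolding g_def
    by (rule derivative_eq_intros refl)+
       (simp add: gaussian_monomial_deriv_def gaussian_monomial_eq algebra_simps)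
  ultimately show ?thesis
    by (simp add: has_vector_derivative_real_field)
qed

lemma filterlim_line_at_infinity:
  fixes z w :: "'a :: real_normed_field"
  assumes "w \<noteq> 0" and "F = at_top \<or> F = at_bot"
  shows "filterlim (\<lambda>t. z + of_real t * w) at_infinity F"
proof (rule tendsto_add_filterlim_at_infinity[OF tendsto_const])
  have "filterlim (\<lambda>t. \<bar>t\<bar> * norm w) at_top F"
    using assms by (elim disjE; simp; real_asymp)
  then show "filterlim (\<lambda>t. of_real t * w) at_infinity F"
    by (simp add: filterlim_at_infinity_conv_norm_at_top norm_mult)
qed

lemma integral_gaussian_monomial_deriv:
  assumes "0 < c" and w: "w \<in> {1, \<i>}"
  shows "integral\<^sup>L lborel (gaussian_monomial_deriv c a b w) = 0"
proof (rule integral_complex_eq_zero_by_lines[OF _ _ w])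
  show "gaussian_monomial_deriv c a b w \<in> borel_measurable borel"
    unfolding gaussian_monomial_deriv_def by measurable
  show "integrable lborel (gaussian_monomial_deriv c a b w)"
    unfolding gaussian_monomial_deriv_def
    by (intro Bochner_Integration.integrable_add Bochner_Integration.integrable_diff
        Bochner_Integration.integrable_mult_right integrable_gaussian_monomial assms)
  fix z assume "integrable lborel (\<lambda>t. gaussian_monomial_deriv c a b w (z + of_real t * w))"
  moreover have "isCont (\<lambda>t. gaussian_monomial_deriv c a b w (z + of_real t * w)) t" for t
    unfolding gaussian_monomial_deriv_def gaussian_monomial_def by (intro continuous_intros)
  moreover have "((\<lambda>t. gaussian_monomial c a b (z + of_real t * w)) \<longlongrightarrow> 0) F"
    if "F = at_top \<or> F = at_bot" for F
    using tendsto_gaussian_monomial_at_infinity[OF assms(1)] filterlim_line_at_infinity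
    by (rule filterlim_compose) (use w that in auto)
  ultimately show "(\<integral>t. gaussian_monomial_deriv c a b w (z + of_real t * w) \<partial>lborel) = 0"
    using integral_deriv_vanishing_at_infinity[OF has_vector_derivative_gaussian_monomial_line] by blast
qed

lemma integral_gaussian_monomial_rec:
  assumes "0 < c"
  shows "of_real c * integral\<^sup>L lborel (gaussian_monomial c (a + 1) b)
           = of_nat b * integral\<^sup>L lborel (gaussian_monomial c a (b - 1))"
    and "of_real c * integral\<^sup>L lborel (gaussian_monomial c a (b + 1))
           = of_nat a * integral\<^sup>L lborel (gaussian_monomial c (a - 1) b)"
proof -
  let ?I = "\<lambda>a b. integral\<^sup>L lborel (gaussian_monomial c a b)"
  define P where "P = of_nat a * ?I (a - 1) b - of_real c * ?I a (b + 1)"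
  define Q where "Q = of_nat b * ?I a (b - 1) - of_real c * ?I (a + 1) b"
  have "integral\<^sup>L lborel (gaussian_monomial_deriv c a b w) = w * P + cnj w * Q" for w
    unfolding gaussian_monomial_deriv_def P_def Q_def
    by (simp add: integrable_gaussian_monomial[OF assms])
  then have "P + Q = 0" and "\<i> * P - \<i> * Q = 0"
    using integral_gaussian_monomial_deriv[OF assms, of 1 a b]
      integral_gaussian_monomial_deriv[OF assms, of \<i> a b] by simp_all
  then have "P = 0" and "Q = 0"
    by (auto simp flip: right_diff_distrib)
  then show "of_real c * ?I (a + 1) b = of_nat b * ?I a (b - 1)"
    and "of_real c * ?I a (b + 1) = of_nat a * ?I (a - 1) b"
    by (simp_all add: P_def Q_def)
qed

lemma integral_gaussian_monomial:
  assumes "0 < c"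
  shows "integral\<^sup>L lborel (gaussian_monomial c a b) = (if a = b then of_real (pi * fact a / c ^ (a + 1)) else 0)"
proof (induction a arbitrary: b)
  case 0
  show ?case
  proof (cases b)
    case 0
    have "has_bochner_integral lborel (\<lambda>z. complex_of_real (exp (- c * (cmod z)\<^sup>2)))
        (complex_of_real (pi / c))"
      by (rule has_bochner_integral_of_real[OF has_bochner_integral_gaussian_complex[OF assms]])
    moreover have "gaussian_monomial c 0 0 = (\<lambda>z. complex_of_real (exp (- c * (cmod z)\<^sup>2)))"
      by (simp add: fun_eq_iff gaussian_monomial_def)
    ultimately show ?thesis
      using 0 by (simp add: has_bochner_integral_iff)
  next
    case (Suc b')
    then show ?thesis
      using integral_gaussian_monomial_rec(2)[OF assms, of 0 b'] assms by simp
  qed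
next
  case (Suc a)
  show ?case
  proof (cases b)
    case 0
    then show ?thesis
      using integral_gaussian_monomial_rec(1)[OF assms, of a 0] assms by simp
  next
    case (Suc b')
    have "of_real c * integral\<^sup>L lborel (gaussian_monomial c (Suc a) b)
        = of_nat b * integral\<^sup>L lborel (gaussian_monomial c a b')"
      using integral_gaussian_monomial_rec(1)[OF assms, of a b] Suc by simp
    then have "integral\<^sup>L lborel (gaussian_monomial c (Suc a) b)
        = of_nat b / of_real c * integral\<^sup>L lborel (gaussian_monomial c a b')"
      using assms by (simp add: field_simps)
    also have "\<dots> = of_nat b / of_real c * (if a = b' then of_real (pi * fact a / c ^ (a + 1)) else 0)"
      by (simp only: Suc.IH)
    also have "\<dots> = (if Suc a = b then of_real (pi * fact (Suc a) / c ^ (Suc a + 1)) else 0)"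
      using Suc assms by (auto simp: field_simps)
    finally show ?thesis .
  qed
qed

lemma has_bochner_integral_gaussian_monomial:
  assumes "0 < c"
  shows "has_bochner_integral lborel (gaussian_monomial c a b)
           (if a = b then of_real (pi * fact a / c ^ (a + 1)) else 0)"
  using integrable_gaussian_monomial[OF assms] integral_gaussian_monomial[OF assms]
  by (simp add: has_bochner_integral_iff)


section \<open>Combinatorial identities\<close>

lemma sum_alternating_binomial_Suc:
  fixes f :: "nat \<Rightarrow> 'a::comm_ring_1"
  shows "(\<Sum>p\<le>Suc k. (-1) ^ p * of_nat (Suc k choose p) * f p)
           = (\<Sum>p\<le>k. (-1) ^ p * of_nat (k choose p) * (f p - f (Suc p)))"
proof -
  have "(\<Sum>p\<le>Suc k. (-1) ^ p * of_nat (Suc k choose p) * f p)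
      = f 0 + (\<Sum>p\<le>k. (-1) ^ Suc p * of_nat (Suc k choose Suc p) * f (Suc p))"
    by (subst sum.atMost_Suc_shift) simp
  also have "\<dots> = f 0 + (\<Sum>p\<le>k. (-1) ^ Suc p * of_nat (k choose Suc p) * f (Suc p))
      + (\<Sum>p\<le>k. (-1) ^ Suc p * of_nat (k choose p) * f (Suc p))"
    by (simp add: ring_distribs sum.distrib sum_subtractf sum_negf)
  also have "f 0 + (\<Sum>p\<le>k. (-1) ^ Suc p * of_nat (k choose Suc p) * f (Suc p))
      = (\<Sum>p\<le>Suc k. (-1) ^ p * of_nat (k choose p) * f p)"
    by (subst sum.atMost_Suc_shift) simp
  also have "\<dots> = (\<Sum>p\<le>k. (-1) ^ p * of_nat (k choose p) * f p)"
    by (simp add: binomial_eq_0)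
  finally show ?thesis
    by (simp add: sum_subtractf sum_negf algebra_simps)
qed

lemma sum_alternating_binomial_choose:
  assumes "k \<le> N"
  shows "(\<Sum>p\<le>k. (-1) ^ p * of_nat (k choose p) * of_nat ((N - p) choose m) :: 'a::comm_ring_1)
           = (if k \<le> m then of_nat ((N - k) choose (m - k)) else 0)"
  using assms
proof (induction k arbitrary: N m)
  case (Suc k)
  show ?case
  proof (cases m)
    case 0
    then show ?thesis
      by (subst sum_alternating_binomial_Suc) simp
  next
    case (Suc m')
    have "of_nat ((N - p) choose m) - of_nat ((N - Suc p) choose m) = (of_nat ((N - 1 - p) choose m') :: 'a)"
      if "p \<le> k" for p
    proof -
      have "N - p = Suc (N - 1 - p)"
        using that Suc.prems by linarith
      then show ?thesis
        using Suc by simp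
    qed
    then have "(\<Sum>p\<le>Suc k. (-1) ^ p * of_nat (Suc k choose p) * of_nat ((N - p) choose m) :: 'a)
        = (\<Sum>p\<le>k. (-1) ^ p * of_nat (k choose p) * of_nat ((N - 1 - p) choose m'))"
      by (subst sum_alternating_binomial_Suc) (auto intro!: sum.cong)
    also have "\<dots> = (if Suc k \<le> m then of_nat ((N - Suc k) choose (m - Suc k)) else 0)"
      using Suc.IH[of "N - 1" m'] Suc.prems Suc by simp
    finally show ?thesis .
  qed
qed simp

lemma sum_alternating_fact_ratio:
  assumes "k \<le> n" and "l \<le> n"
  shows "(\<Sum>p\<le>min k l. (-1) ^ p * fact (n - p) / (fact p * fact (k - p) * fact (l - p)) :: real)
     = (if k + l \<le> n then fact (n - k) * fact (n - l) / (fact k * fact l * fact (n - k - l)) else 0)"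
proof -
  define g where "g p = (-1) ^ p * real (k choose p) * real ((n - p) choose (n - l))" for p
  have "(-1) ^ p * fact (n - p) / (fact p * fact (k - p) * fact (l - p)) = fact (n - l) / fact k * g p"
    if "p \<le> min k l" for p
  proof -
    have k_choose: "real (k choose p) = fact k / (fact p * fact (k - p))"
      using that by (simp add: binomial_fact)
    have "n - l \<le> n - p"
      using that by auto
    then have n_choose: "real ((n - p) choose (n - l)) = fact (n - p) / (fact (n - l) * fact (l - p))"
      using binomial_fact[of "n - l" "n - p", where 'a = real] that assms by simp
    show ?thesis
      unfolding g_def k_choose n_choose by (simp add: field_simps)
  qed
  then have "(\<Sum>p\<le>min k l. (-1) ^ p * fact (n - p) / (fact p * fact (k - p) * fact (l - p)) :: real)
      = fact (n - l) / fact k * (\<Sum>p\<le>min k l. g p)"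
    by (simp add: sum_distrib_left)
  also have "(\<Sum>p\<le>min k l. g p) = (\<Sum>p\<le>k. g p)"
    by (rule sum.mono_neutral_left) (use assms in \<open>auto simp: g_def binomial_eq_0\<close>)
  also have "\<dots> = (if k \<le> n - l then real ((n - k) choose (n - l - k)) else 0)"
    unfolding g_def by (rule sum_alternating_binomial_choose[OF assms(1)])
  also have "fact (n - l) / fact k * \<dots>
      = (if k + l \<le> n then fact (n - k) * fact (n - l) / (fact k * fact l * fact (n - k - l)) else 0)"
  proof (cases "k + l \<le> n")
    case True
    then have "real ((n - k) choose (n - l - k)) = fact (n - k) / (fact (n - k - l) * fact l)"
      using binomial_fact[of "n - l - k" "n - k", where 'a = real] by (simp add: add.commute)
    moreover have "k \<le> n - l"
      using True by linarith
    ultimately show ?thesis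
      using True by (simp add: ac_simps)
  qed (use assms in simp)
  finally show ?thesis .
qed

lemma power_mult_binomial_le:
  fixes \<eta> :: real
  assumes "0 \<le> \<eta>" and "\<eta> * real (m + j) \<le> 2" and "1 \<le> j"
  shows "\<eta> ^ j * real ((m + j) choose j) \<le> \<eta> * (m + 1)"
  using assms(3,2)
proof (induction j rule: nat_induct_at_least)
  case (Suc j)
  have "\<eta> * real (m + j) \<le> \<eta> * real (m + Suc j)"
    using assms(1) by (intro mult_left_mono) auto
  then have IH: "\<eta> ^ j * real ((m + j) choose j) \<le> \<eta> * (m + 1)"
    using Suc.prems by (intro Suc.IH) linarith
  have "real (Suc j) * real ((m + Suc j) choose Suc j) = real (m + Suc j) * real ((m + j) choose j)"
    unfolding of_nat_mult[symmetric] using Suc_times_binomial[of j "m + j"]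
    by (simp del: binomial_Suc_Suc)
  then have "\<eta> ^ Suc j * real ((m + Suc j) choose Suc j)
      = \<eta> ^ j * real ((m + j) choose j) * (\<eta> * real (m + Suc j) / real (Suc j))"
    by (simp add: field_simps)
  \<comment> \<open>the ratio is at most 1 because \<open>\<eta> (m + j + 1) \<le> 2 \<le> j + 1\<close>\<close>
  also have "\<dots> \<le> \<eta> ^ j * real ((m + j) choose j) * 1"
    using Suc.prems Suc.hyps assms(1) by (intro mult_left_mono) (auto simp: field_simps)
  also note IH
  finally show ?case
    by simp
qed simp

section \<open>Density matrices\<close>

lemma density_boundedD:
  assumes "density_bounded E \<rho>"
  shows density_bounded_outside: "E < k \<or> E < l \<Longrightarrow> \<rho> k l = 0"
    and density_bounded_cnj: "\<rho> l k = cnj (\<rho> k l)"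
    and density_bounded_psd: "0 \<le> Re (\<Sum>k\<le>E. \<Sum>l\<le>E. cnj (x k) * \<rho> k l * x l)"
    and density_bounded_trace: "(\<Sum>k\<le>E. \<rho> k k) = 1"
  using assms unfolding density_bounded_def by blast+

lemma quadratic_form_restrict:
  fixes \<rho> :: "nat \<Rightarrow> nat \<Rightarrow> complex"
  assumes "S \<subseteq> {..E}" and "\<And>i. i \<notin> S \<Longrightarrow> x i = 0"
  shows "(\<Sum>k\<le>E. \<Sum>l\<le>E. cnj (x k) * \<rho> k l * x l) = (\<Sum>k\<in>S. \<Sum>l\<in>S. cnj (x k) * \<rho> k l * x l)"
proof -
  have "finite S"
    using assms(1) finite_subset by blast
  have "(\<Sum>l\<le>E. cnj (x k) * \<rho> k l * x l) = (\<Sum>l\<in>S. cnj (x k) * \<rho> k l * x l)" for k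
    by (rule sum.mono_neutral_right) (use assms in auto)
  then show ?thesis
    by (simp only:) (rule sum.mono_neutral_right; use assms in auto)
qed

lemma quadratic_nonneg_imp_discriminant_le:
  fixes a b c :: real
  assumes nonneg: "\<And>x. 0 \<le> a * x\<^sup>2 + b * x + c" and "0 \<le> a"
  shows "b\<^sup>2 \<le> 4 * a * c"
proof (cases "a = 0")
  case True
  have "b = 0"
  proof (rule ccontr)
    assume "b \<noteq> 0"
    then show False
      using nonneg[of "- (c + 1) / b"] True by (simp add: field_simps)
  qed
  with True show ?thesis
    by simp
next
  case False
  with \<open>0 \<le> a\<close> have "0 < a"
    by simp
  have "0 \<le> a * (- b / (2 * a))\<^sup>2 + b * (- b / (2 * a)) + c"
    by (rule nonneg)
  also have "\<dots> = c - b\<^sup>2 / (4 * a)"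
    using \<open>0 < a\<close> by (simp add: field_simps power2_eq_square)
  finally show ?thesis
    using \<open>0 < a\<close> by (simp add: field_simps)
qed

lemma density_bounded_diag_nonneg:
  assumes "density_bounded E \<rho>"
  shows "0 \<le> Re (\<rho> a a)"
proof (cases "a \<le> E")
  case True
  define x :: "nat \<Rightarrow> complex" where "x i = (if i = a then 1 else 0)" for i
  have "(\<Sum>k\<le>E. \<Sum>l\<le>E. cnj (x k) * \<rho> k l * x l) = \<rho> a a"
    using True by (subst quadratic_form_restrict[of "{a}"]) (auto simp: x_def)
  then show ?thesis
    using density_bounded_psd[OF assms, of x] by simp
qed (use density_bounded_outside[OF assms] in simp)

lemma density_bounded_quadratic_nonneg:
  assumes \<rho>: "density_bounded E \<rho>" and ab: "a \<le> E" "b \<le> E" "a \<noteq> b"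
  shows "0 \<le> Re (\<rho> a a) * t\<^sup>2 + (- 2 * (cmod (\<rho> a b))\<^sup>2) * t + (cmod (\<rho> a b))\<^sup>2 * Re (\<rho> b b)"
proof -
  define x :: "nat \<Rightarrow> complex" where
    "x i = (if i = a then of_real t else if i = b then - cnj (\<rho> a b) else 0)" for i
  have "0 \<le> Re (\<Sum>k\<le>E. \<Sum>l\<le>E. cnj (x k) * \<rho> k l * x l)"
    by (rule density_bounded_psd[OF \<rho>])
  also have "\<dots> = Re (\<rho> a a) * t\<^sup>2 + (- 2 * (cmod (\<rho> a b))\<^sup>2) * t + (cmod (\<rho> a b))\<^sup>2 * Re (\<rho> b b)"
    using ab density_bounded_cnj[OF \<rho>, of a b] unfolding cmod_power2
    by (subst quadratic_form_restrict[of "{a, b}"]) (auto simp: x_def power2_eq_square algebra_simps)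
  finally show ?thesis .
qed

lemma density_bounded_offdiag_le:
  assumes \<rho>: "density_bounded E \<rho>"
  shows "(cmod (\<rho> a b))\<^sup>2 \<le> Re (\<rho> a a) * Re (\<rho> b b)"
proof -
  consider "a = b" | "a \<le> E" "b \<le> E" "a \<noteq> b" | "E < a \<or> E < b"
    by linarith
  then show ?thesis
  proof cases
    case 1
    have "Im (\<rho> a a) = 0"
      using density_bounded_cnj[OF \<rho>, of a a] by (simp add: complex_eq_iff)
    then show ?thesis
      using 1 by (simp add: cmod_eq_Re power2_eq_square)
  next
    case 2
    define r where "r = cmod (\<rho> a b)"
    have "(- 2 * r\<^sup>2)\<^sup>2 \<le> 4 * Re (\<rho> a a) * (r\<^sup>2 * Re (\<rho> b b))"
      using density_bounded_quadratic_nonneg[OF \<rho> 2] density_bounded_diag_nonneg[OF \<rho>]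
      unfolding r_def by (rule quadratic_nonneg_imp_discriminant_le)
    then have ineq: "r\<^sup>2 * r\<^sup>2 \<le> r\<^sup>2 * (Re (\<rho> a a) * Re (\<rho> b b))"
      by (simp add: power2_eq_square algebra_simps)
    show ?thesis
      unfolding r_def[symmetric]
    proof (cases "r = 0")
      case False
      then have "0 < r\<^sup>2"
        using r_def by simp
      then show "r\<^sup>2 \<le> Re (\<rho> a a) * Re (\<rho> b b)"
        using ineq by (rule mult_le_cancel_left_pos[THEN iffD1])
    qed (use density_bounded_diag_nonneg[OF \<rho>] in simp)
  next
    case 3
    then have "\<rho> a b = 0"
      by (rule density_bounded_outside[OF \<rho>])
    then show ?thesis
      by (simp add: density_bounded_diag_nonneg[OF \<rho>])
  qed
qed


section \<open>The Husimi expectation of f_A\<close>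

definition LL_coeff :: "nat \<Rightarrow> nat \<Rightarrow> nat \<Rightarrow> real" where
  "LL_coeff k l p = sqrt (fact k) * sqrt (fact l) * (-1) ^ p / (fact p * fact (k - p) * fact (l - p))"

definition fA_unit :: "real \<Rightarrow> nat \<Rightarrow> nat \<Rightarrow> complex \<Rightarrow> complex" where
  "fA_unit \<eta> k l z = of_real (1 / \<eta> * exp ((1 - 1 / \<eta>) * (cmod z)\<^sup>2))
     * (LL k l (z / of_real (sqrt \<eta>)) / of_real (sqrt (\<eta> ^ (k + l))))"

lemma fA_eq_sum_fA_unit: "fA E A z \<eta> = (\<Sum>k\<le>E. \<Sum>l\<le>E. A k l * fA_unit \<eta> k l z)"
  by (simp add: fA_def fA_unit_def sum_distrib_left mult_ac)

lemma husimi_eq_sum: "husimi E \<rho> \<alpha> = (\<Sum>k\<le>E. \<Sum>l\<le>E. \<rho> k l * (cnj (coh \<alpha> k) * coh \<alpha> l / pi))"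
  by (simp add: husimi_def sum_distrib_left mult_ac)

lemma coh_product_eq:
  "cnj (coh \<alpha> k) * coh \<alpha> l / pi
     = of_real (1 / (pi * sqrt (fact k) * sqrt (fact l))) * gaussian_monomial 1 l k \<alpha>"
proof -
  have "exp (- (cmod \<alpha>)\<^sup>2 / 2) * exp (- (cmod \<alpha>)\<^sup>2 / 2) = exp (- 1 * (cmod \<alpha>)\<^sup>2)"
    by (simp flip: exp_add)
  then show ?thesis
    by (simp add: coh_def gaussian_monomial_def field_simps flip: of_real_mult)
qed

lemma fA_unit_eq:
  assumes "0 < \<eta>"
  shows "fA_unit \<eta> k l z = (\<Sum>p\<le>min k l.
     of_real (LL_coeff k l p / \<eta> ^ (k + l - p + 1)) * gaussian_monomial (1 / \<eta> - 1) (l - p) (k - p) z)"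
proof -
  define s where "s = sqrt \<eta>"
  define e where "e = exp ((1 - 1 / \<eta>) * (cmod z)\<^sup>2)"
  have "of_real (1 / \<eta> * e) * (of_real (LL_coeff k l p) * (z / of_real s) ^ (l - p) * cnj (z / of_real s) ^ (k - p))
      / of_real (sqrt (\<eta> ^ (k + l)))
      = of_real (LL_coeff k l p / \<eta> ^ (k + l - p + 1)) * gaussian_monomial (1 / \<eta> - 1) (l - p) (k - p) z"
    if "p \<le> min k l" for p
  proof -
    define W where "W = z ^ (l - p) * cnj z ^ (k - p)"
    have "sqrt (\<eta> ^ (k + l)) * (s ^ (l - p) * s ^ (k - p)) = s ^ (2 * (k + l - p))"
      using that by (simp add: s_def real_sqrt_power flip: power_add) (rule arg_cong[where f = "power _"]; simp)
    also have "\<dots> = \<eta> ^ (k + l - p)"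
      using assms by (simp add: s_def power_mult)
    finally have scalar: "1 / \<eta> * e * LL_coeff k l p / (sqrt (\<eta> ^ (k + l)) * (s ^ (l - p) * s ^ (k - p)))
        = LL_coeff k l p / \<eta> ^ (k + l - p + 1) * e"
      by simp
    have scaled: "(z / of_real s) ^ (l - p) * cnj (z / of_real s) ^ (k - p) = W / of_real (s ^ (l - p) * s ^ (k - p))"
      by (simp add: W_def power_divide)
    have "of_real (1 / \<eta> * e) * (of_real (LL_coeff k l p) * (z / of_real s) ^ (l - p) * cnj (z / of_real s) ^ (k - p))
        / of_real (sqrt (\<eta> ^ (k + l)))
        = of_real (1 / \<eta> * e) * (of_real (LL_coeff k l p) * (W / of_real (s ^ (l - p) * s ^ (k - p))))
          / of_real (sqrt (\<eta> ^ (k + l)))"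
      by (simp only: mult.assoc scaled)
    also have "\<dots> = of_real (1 / \<eta> * e * LL_coeff k l p / (sqrt (\<eta> ^ (k + l)) * (s ^ (l - p) * s ^ (k - p)))) * W"
      by (simp add: divide_inverse)
    also have "\<dots> = of_real (LL_coeff k l p / \<eta> ^ (k + l - p + 1)) * (of_real e * W)"
      unfolding scalar by simp
    finally show ?thesis
      by (simp add: gaussian_monomial_def e_def W_def algebra_simps)
  qed
  then show ?thesis
    unfolding fA_unit_def LL_def sum_divide_distrib sum_distrib_left e_def[symmetric] s_def[symmetric]
    by (intro sum.cong refl) (auto simp: LL_coeff_def mult.assoc)
qed

definition shift_weight :: "nat \<Rightarrow> nat \<Rightarrow> nat \<Rightarrow> real" where
  "shift_weight k l j = sqrt (real ((k + j) choose j)) * sqrt (real ((l + j) choose j))"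

definition husimi_fA_coeff :: "real \<Rightarrow> nat \<Rightarrow> nat \<Rightarrow> nat \<Rightarrow> nat \<Rightarrow> real" where
  "husimi_fA_coeff \<eta> k l k' l' =
     (if k \<le> l' \<and> l' + l = k' + k then \<eta> ^ (l' - k) * shift_weight k l (l' - k) else 0)"

lemma shift_weight_fact:
  "shift_weight k l j = sqrt (fact (k + j)) * sqrt (fact (l + j)) / (sqrt (fact k) * sqrt (fact l) * fact j)"
proof -
  have binomial: "sqrt (real ((m + j) choose j)) = sqrt (fact (m + j)) / (sqrt (fact j) * sqrt (fact m))" for m
    using binomial_fact[of j "m + j", where 'a = real] by (simp add: real_sqrt_divide real_sqrt_mult)
  have "shift_weight k l j = sqrt (fact (k + j)) * sqrt (fact (l + j))
      / ((sqrt (fact j) * sqrt (fact j)) * (sqrt (fact k) * sqrt (fact l)))"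
    unfolding shift_weight_def binomial by (simp add: mult_ac)
  then show ?thesis
    by (simp add: mult_ac)
qed

lemma sum_LL_coeff_gaussian_moments:
  assumes "0 < \<eta>" and n: "l' + l = k' + k"
  shows "(\<Sum>p\<le>min k l. LL_coeff k l p * fact (l' + l - p) * \<eta> ^ (l' + l - p + 1)
            / (\<eta> ^ (k + l - p + 1) * sqrt (fact k') * sqrt (fact l')))
         = husimi_fA_coeff \<eta> k l k' l'"
proof -
  define n where "n = l' + l"
  define C where "C = sqrt (fact k) * sqrt (fact l) * \<eta> ^ n / (\<eta> ^ (k + l) * sqrt (fact k') * sqrt (fact l'))"
  have "k \<le> n" "l \<le> n" "n - k = k'" "n - l = l'"
    using n by (auto simp: n_def)
  have "LL_coeff k l p * fact (n - p) * \<eta> ^ (n - p + 1) / (\<eta> ^ (k + l - p + 1) * sqrt (fact k') * sqrt (fact l'))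
      = C * ((-1) ^ p * fact (n - p) / (fact p * fact (k - p) * fact (l - p)))"
    if "p \<le> min k l" for p
  proof -
    have "n - p + 1 + (k + l) = n + (k + l - p + 1)"
      using that \<open>k \<le> n\<close> by auto
    then have "\<eta> ^ (n - p + 1) * \<eta> ^ (k + l) = \<eta> ^ n * \<eta> ^ (k + l - p + 1)"
      by (simp flip: power_add)
    then show ?thesis
      using assms(1) by (simp add: C_def LL_coeff_def field_simps)
  qed
  then have "(\<Sum>p\<le>min k l. LL_coeff k l p * fact (l' + l - p) * \<eta> ^ (l' + l - p + 1)
            / (\<eta> ^ (k + l - p + 1) * sqrt (fact k') * sqrt (fact l')))
      = C * (\<Sum>p\<le>min k l. (-1) ^ p * fact (n - p) / (fact p * fact (k - p) * fact (l - p)))"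
    by (simp add: n_def sum_distrib_left)
  also have "\<dots> = C * (if k + l \<le> n then fact k' * fact l' / (fact k * fact l * fact (n - k - l)) else 0)"
    using sum_alternating_fact_ratio[OF \<open>k \<le> n\<close> \<open>l \<le> n\<close>] \<open>n - k = k'\<close> \<open>n - l = l'\<close> by simp
  also have "\<dots> = husimi_fA_coeff \<eta> k l k' l'"
  proof (cases "k \<le> l'")
    case True
    define j where "j = l' - k"
    have "k' = l + j" "l' = k + j" "n = k + l + j"
      using True n by (auto simp: j_def n_def)
    moreover have "sqrt (fact m) * sqrt (fact m) = (fact m :: real)" for m
      by simp
    ultimately show ?thesis
      using True assms(1)
      by (simp add: C_def husimi_fA_coeff_def shift_weight_fact j_def[symmetric] power_add field_simps)
  qed (use n in \<open>auto simp: husimi_fA_coeff_def n_def\<close>)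
  finally show ?thesis .
qed

lemma has_bochner_integral_coh_fA_unit:
  assumes "0 < \<eta>"
  shows "has_bochner_integral lborel (\<lambda>\<alpha>. cnj (coh \<alpha> k') * coh \<alpha> l' / pi * fA_unit \<eta> k l \<alpha>)
           (of_real (husimi_fA_coeff \<eta> k l k' l'))"
proof -
  define \<kappa> where "\<kappa> p = LL_coeff k l p / \<eta> ^ (k + l - p + 1) / (pi * sqrt (fact k') * sqrt (fact l'))" for p
  have "cnj (coh \<alpha> k') * coh \<alpha> l' / pi * fA_unit \<eta> k l \<alpha>
      = (\<Sum>p\<le>min k l. of_real (\<kappa> p) * gaussian_monomial (1 / \<eta>) (l' + (l - p)) (k' + (k - p)) \<alpha>)" for \<alpha>
  proof -
    have "gaussian_monomial 1 l' k' \<alpha> * gaussian_monomial (1 / \<eta> - 1) (l - p) (k - p) \<alpha>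
        = gaussian_monomial (1 / \<eta>) (l' + (l - p)) (k' + (k - p)) \<alpha>" for p
      by (simp add: gaussian_monomial_mult)
    then show ?thesis
      unfolding coh_product_eq fA_unit_eq[OF assms] sum_distrib_left
      by (intro sum.cong refl) (simp add: \<kappa>_def mult_ac flip: of_real_mult)
  qed
  moreover have "has_bochner_integral lborel
      (\<lambda>\<alpha>. \<Sum>p\<le>min k l. of_real (\<kappa> p) * gaussian_monomial (1 / \<eta>) (l' + (l - p)) (k' + (k - p)) \<alpha>)
      (\<Sum>p\<le>min k l. of_real (\<kappa> p) * (if l' + (l - p) = k' + (k - p)
          then of_real (pi * fact (l' + (l - p)) / (1 / \<eta>) ^ (l' + (l - p) + 1)) else 0))"
    using assms by (intro has_bochner_integral_sum has_bochner_integral_mult_right has_bochner_integral_gaussian_monomial) simp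
  moreover have "(\<Sum>p\<le>min k l. of_real (\<kappa> p) * (if l' + (l - p) = k' + (k - p)
          then of_real (pi * fact (l' + (l - p)) / (1 / \<eta>) ^ (l' + (l - p) + 1)) else 0))
      = (of_real (husimi_fA_coeff \<eta> k l k' l') :: complex)"
  proof (cases "l' + l = k' + k")
    case True
    have "of_real (\<kappa> p) * (if l' + (l - p) = k' + (k - p)
          then of_real (pi * fact (l' + (l - p)) / (1 / \<eta>) ^ (l' + (l - p) + 1)) else 0)
        = (of_real (LL_coeff k l p * fact (l' + l - p) * \<eta> ^ (l' + l - p + 1)
            / (\<eta> ^ (k + l - p + 1) * sqrt (fact k') * sqrt (fact l'))) :: complex)"
      if "p \<in> {..min k l}" for p
      using that True by (simp add: \<kappa>_def field_simps)
    then show ?thesis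
      using sum_LL_coeff_gaussian_moments[OF assms True] by (simp flip: of_real_sum)
  next
    case False
    then show ?thesis
      by (auto simp: husimi_fA_coeff_def intro!: sum.neutral)
  qed
  ultimately show ?thesis
    by simp
qed

lemma has_bochner_integral_husimi_fA:
  assumes "0 < \<eta>"
  shows "has_bochner_integral lborel (\<lambda>\<alpha>. husimi E \<rho> \<alpha> * fA E A \<alpha> \<eta>)
           (\<Sum>k\<le>E. \<Sum>l\<le>E. A k l * (\<Sum>k'\<le>E. \<Sum>l'\<le>E. \<rho> k' l' * of_real (husimi_fA_coeff \<eta> k l k' l')))"
proof -
  have "(\<lambda>\<alpha>. husimi E \<rho> \<alpha> * fA E A \<alpha> \<eta>) = (\<lambda>\<alpha>. \<Sum>k\<le>E. \<Sum>l\<le>E. A k l * (\<Sum>k'\<le>E. \<Sum>l'\<le>E.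
      \<rho> k' l' * (cnj (coh \<alpha> k') * coh \<alpha> l' / pi * fA_unit \<eta> k l \<alpha>)))"
    unfolding husimi_eq_sum fA_eq_sum_fA_unit sum_distrib_left sum_distrib_right
    by (simp add: mult_ac)
  then show ?thesis
    by (simp only:) (intro has_bochner_integral_sum has_bochner_integral_mult_right
        has_bochner_integral_coh_fA_unit assms)
qed

lemma sum_if_shift:
  fixes g :: "nat \<Rightarrow> 'a::comm_monoid_add"
  assumes "\<And>j. E < k + j \<Longrightarrow> g j = 0"
  shows "(\<Sum>i\<le>E. if k \<le> i then g (i - k) else 0) = (\<Sum>j\<le>E. g j)"
proof -
  have "(\<Sum>i\<le>E. if k \<le> i then g (i - k) else 0) = (\<Sum>i\<in>{k..E}. g (i - k))"
    by (rule sum.mono_neutral_cong_right) auto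
  also have "\<dots> = (\<Sum>j\<in>{..E} \<inter> {j. k + j \<le> E}. g j)"
    by (rule sum.reindex_bij_witness[where i = "\<lambda>j. k + j" and j = "\<lambda>i. i - k"]) auto
  also have "\<dots> = (\<Sum>j\<le>E. g j)"
    by (rule sum.mono_neutral_left) (use assms in \<open>force simp: not_le\<close>)+
  finally show ?thesis .
qed

lemma sum_husimi_fA_coeff:
  assumes "\<And>a b. E < a \<or> E < b \<Longrightarrow> \<rho> a b = 0"
  shows "(\<Sum>k'\<le>E. \<Sum>l'\<le>E. \<rho> k' l' * of_real (husimi_fA_coeff \<eta> k l k' l'))
       = (\<Sum>j\<le>E. \<rho> (l + j) (k + j) * of_real (\<eta> ^ j * shift_weight k l j))"
proof -
  define g where "g j = \<rho> (l + j) (k + j) * of_real (\<eta> ^ j * shift_weight k l j)" for j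
  have "(\<Sum>k'\<le>E. \<rho> k' l' * of_real (husimi_fA_coeff \<eta> k l k' l')) = (if k \<le> l' then g (l' - k) else 0)"
    for l'
  proof (cases "k \<le> l'")
    case True
    then have "(\<Sum>k'\<le>E. \<rho> k' l' * of_real (husimi_fA_coeff \<eta> k l k' l'))
        = (\<Sum>k'\<le>E. if k' = l + (l' - k) then g (l' - k) else 0)"
      by (intro sum.cong) (auto simp: husimi_fA_coeff_def g_def)
    also have "\<dots> = (if k \<le> l' then g (l' - k) else 0)"
      using True assms by (simp add: g_def)
    finally show ?thesis .
  qed (simp add: husimi_fA_coeff_def)
  then have "(\<Sum>k'\<le>E. \<Sum>l'\<le>E. \<rho> k' l' * of_real (husimi_fA_coeff \<eta> k l k' l'))
      = (\<Sum>l'\<le>E. if k \<le> l' then g (l' - k) else 0)"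
    by (subst sum.swap) simp
  also have "\<dots> = (\<Sum>j\<le>E. g j)"
    by (rule sum_if_shift) (simp add: g_def assms)
  finally show ?thesis
    by (simp add: g_def)
qed

definition husimi_fA_bias :: "nat \<Rightarrow> real \<Rightarrow> (nat \<Rightarrow> nat \<Rightarrow> complex) \<Rightarrow> nat \<Rightarrow> nat \<Rightarrow> complex" where
  "husimi_fA_bias E \<eta> \<rho> k l = (\<Sum>j\<in>{1..E}. \<rho> (l + j) (k + j) * of_real (\<eta> ^ j * shift_weight k l j))"

lemma integral_husimi_fA:
  assumes "0 < \<eta>" and \<rho>: "density_bounded E \<rho>"
  shows "integrable lborel (\<lambda>\<alpha>. husimi E \<rho> \<alpha> * fA E A \<alpha> \<eta>)"
    and "(LINT \<alpha>|lborel. husimi E \<rho> \<alpha> * fA E A \<alpha> \<eta>)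
           = tr_prod E A \<rho> + (\<Sum>k\<le>E. \<Sum>l\<le>E. A k l * husimi_fA_bias E \<eta> \<rho> k l)"
proof -
  note integral = has_bochner_integral_husimi_fA[OF assms(1), of E \<rho> A]
  then show "integrable lborel (\<lambda>\<alpha>. husimi E \<rho> \<alpha> * fA E A \<alpha> \<eta>)"
    by (simp add: has_bochner_integral_iff)
  have "(\<Sum>j\<le>E. \<rho> (l + j) (k + j) * of_real (\<eta> ^ j * shift_weight k l j))
      = \<rho> l k + husimi_fA_bias E \<eta> \<rho> k l" for k l
    by (simp add: husimi_fA_bias_def atMost_atLeast0 sum.atLeast_Suc_atMost shift_weight_def)
  then show "(LINT \<alpha>|lborel. husimi E \<rho> \<alpha> * fA E A \<alpha> \<eta>)
      = tr_prod E A \<rho> + (\<Sum>k\<le>E. \<Sum>l\<le>E. A k l * husimi_fA_bias E \<eta> \<rho> k l)"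
    using integral
    by (simp add: has_bochner_integral_iff sum_husimi_fA_coeff density_bounded_outside[OF \<rho>]
        tr_prod_def distrib_left sum.distrib)
qed

section \<open>Bounding the bias\<close>

lemma sum_binomial_weighted_le:
  fixes d :: "nat \<Rightarrow> real"
  assumes d: "\<And>a. 0 \<le> d a" "\<And>a. E < a \<Longrightarrow> d a = 0" "(\<Sum>a\<le>E. d a) = 1"
    and \<eta>: "0 \<le> \<eta>" "\<eta> * real E \<le> 2"
  shows "(\<Sum>j\<in>{1..E}. \<eta> ^ j * real ((m + j) choose j) * d (m + j)) \<le> \<eta> * (m + 1)"
proof -
  have "(\<Sum>j\<in>{1..E}. \<eta> ^ j * real ((m + j) choose j) * d (m + j)) \<le> (\<Sum>j\<in>{1..E}. \<eta> * (m + 1) * d (m + j))"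
  proof (rule sum_mono)
    fix j assume "j \<in> {1..E}"
    show "\<eta> ^ j * real ((m + j) choose j) * d (m + j) \<le> \<eta> * (m + 1) * d (m + j)"
    proof (cases "m + j \<le> E")
      case True
      then have "\<eta> * real (m + j) \<le> 2"
        using \<eta> by (meson mult_left_mono of_nat_le_iff order_trans)
      then show ?thesis
        using power_mult_binomial_le[OF \<eta>(1)] \<open>j \<in> {1..E}\<close> d(1) by (intro mult_right_mono) auto
    qed (simp add: d)
  qed
  also have "\<dots> = \<eta> * (m + 1) * (\<Sum>a\<in>{m + 1..m + E}. d a)"
    by (simp add: sum_distrib_left sum.shift_bounds_cl_nat_ivl[of "\<lambda>a. d a" 1 m E, simplified] add.commute)
  also have "(\<Sum>a\<in>{m + 1..m + E}. d a) = (\<Sum>a\<in>{m + 1..m + E} \<inter> {..E}. d a)"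
    by (rule sum.mono_neutral_right) (auto simp: d)
  also have "\<dots> \<le> (\<Sum>a\<le>E. d a)"
    by (rule sum_mono2) (auto simp: d)
  finally show ?thesis
    using d \<eta> by (simp add: mult_left_mono)
qed

lemma norm_husimi_fA_bias_le:
  assumes \<rho>: "density_bounded E \<rho>" and \<eta>: "0 < \<eta>" "\<eta> * real E < 2"
  shows "cmod (husimi_fA_bias E \<eta> \<rho> k l) \<le> \<eta> * sqrt (real ((k + 1) * (l + 1)))"
proof -
  define d where "d a = Re (\<rho> a a)" for a
  have d: "\<And>a. 0 \<le> d a" "\<And>a. E < a \<Longrightarrow> d a = 0" "(\<Sum>a\<le>E. d a) = 1"
    using density_bounded_diag_nonneg[OF \<rho>] density_bounded_outside[OF \<rho>]
      arg_cong[OF density_bounded_trace[OF \<rho>], of Re]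
    by (auto simp: d_def)
  define X where "X j = \<eta> ^ j * real ((l + j) choose j) * d (l + j)" for j
  define Y where "Y j = \<eta> ^ j * real ((k + j) choose j) * d (k + j)" for j
  have "cmod (husimi_fA_bias E \<eta> \<rho> k l) \<le> (\<Sum>j\<in>{1..E}. cmod (\<rho> (l + j) (k + j)) * (\<eta> ^ j * shift_weight k l j))"
    unfolding husimi_fA_bias_def
    by (rule order_trans[OF norm_sum]) (use \<eta>(1) in \<open>simp add: norm_mult norm_power shift_weight_def\<close>)
  also have "\<dots> \<le> (\<Sum>j\<in>{1..E}. sqrt (X j) * sqrt (Y j))"
  proof (rule sum_mono)
    fix j
    have "cmod (\<rho> (l + j) (k + j)) \<le> sqrt (d (l + j) * d (k + j))"
      using density_bounded_offdiag_le[OF \<rho>] unfolding d_def by (rule real_le_rsqrt)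
    moreover have "sqrt (X j) * sqrt (Y j) = sqrt (d (l + j) * d (k + j)) * (\<eta> ^ j * shift_weight k l j)"
      using \<eta>(1) by (simp add: X_def Y_def shift_weight_def real_sqrt_mult real_sqrt_power[symmetric] ac_simps)
    ultimately show "cmod (\<rho> (l + j) (k + j)) * (\<eta> ^ j * shift_weight k l j) \<le> sqrt (X j) * sqrt (Y j)"
      using \<eta>(1) by (simp add: mult_right_mono shift_weight_def)
  qed
  also have "\<dots> \<le> sqrt ((\<Sum>j\<in>{1..E}. X j) * (\<Sum>j\<in>{1..E}. Y j))"
  proof (rule real_le_rsqrt)
    have "X j \<ge> 0" "Y j \<ge> 0" for j
      using \<eta>(1) d(1) by (simp_all add: X_def Y_def)
    then show "(\<Sum>j\<in>{1..E}. sqrt (X j) * sqrt (Y j))\<^sup>2 \<le> (\<Sum>j\<in>{1..E}. X j) * (\<Sum>j\<in>{1..E}. Y j)"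
      using Cauchy_Schwarz_ineq_sum[of "\<lambda>j. sqrt (X j)" "\<lambda>j. sqrt (Y j)" "{1..E}"] by simp
  qed
  also have "\<dots> \<le> sqrt ((\<eta> * (l + 1)) * (\<eta> * (k + 1)))"
    using sum_binomial_weighted_le[OF d, of \<eta>] \<eta>
    by (intro real_sqrt_le_mono mult_mono sum_nonneg) (auto simp: X_def Y_def d(1))
  also have "(\<eta> * (l + 1)) * (\<eta> * (k + 1)) = \<eta>\<^sup>2 * real ((k + 1) * (l + 1))"
    by (simp add: power2_eq_square algebra_simps)
  also have "sqrt (\<eta>\<^sup>2 * real ((k + 1) * (l + 1))) = \<eta> * sqrt (real ((k + 1) * (l + 1)))"
    using \<eta>(1) by (simp add: real_sqrt_mult)
  finally show ?thesis .
qed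

theorem theorem1:
  fixes E :: nat and \<eta> :: real
    and A \<rho> :: "nat \<Rightarrow> nat \<Rightarrow> complex"
  assumes "0 < \<eta>" and "\<eta> < 1" and "\<eta> * real E < 2"
    and "density_bounded E \<rho>"
  shows "integrable lborel (\<lambda>\<alpha>. husimi E \<rho> \<alpha> * fA E A \<alpha> \<eta>)
    \<and> cmod (tr_prod E A \<rho> - (LINT \<alpha>|lborel. husimi E \<rho> \<alpha> * fA E A \<alpha> \<eta>)) \<le> \<eta> * KA E A"
proof
  show "integrable lborel (\<lambda>\<alpha>. husimi E \<rho> \<alpha> * fA E A \<alpha> \<eta>)"
    using integral_husimi_fA(1)[OF assms(1,4)] .
  have "cmod (tr_prod E A \<rho> - (LINT \<alpha>|lborel. husimi E \<rho> \<alpha> * fA E A \<alpha> \<eta>))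
      = cmod (\<Sum>k\<le>E. \<Sum>l\<le>E. A k l * husimi_fA_bias E \<eta> \<rho> k l)"
    by (simp add: integral_husimi_fA(2)[OF assms(1,4)])
  also have "\<dots> \<le> (\<Sum>k\<le>E. \<Sum>l\<le>E. cmod (A k l) * cmod (husimi_fA_bias E \<eta> \<rho> k l))"
    by (rule order_trans[OF norm_sum sum_mono], rule order_trans[OF norm_sum]) (simp add: norm_mult)
  also have "\<dots> \<le> (\<Sum>k\<le>E. \<Sum>l\<le>E. cmod (A k l) * (\<eta> * sqrt (real ((k + 1) * (l + 1)))))"
    by (intro sum_mono mult_left_mono norm_husimi_fA_bias_le assms(1,3,4) norm_ge_zero)
  also have "\<dots> = \<eta> * KA E A"
    by (simp add: KA_def sum_distrib_left ac_simps)
  finally show "cmod (tr_prod E A \<rho> - (LINT \<alpha>|lborel. husimi E \<rho> \<alpha> * fA E A \<alpha> \<eta>)) \<le> \<eta> * KA E A" .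
qed

end
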